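(* For all metric balls $\Theta$ in $\mathbb S^1_\omega$ and $\mathcal D'$ in $K_\omega$ with radius less than $1$, the family $(P^-_\Theta A_nU^+_{\mathcal D'})_{n\in\mathbb N}$ is $0$-Lipschitz well-rounded with respect to $(\mathcal V_\epsilon)_{\epsilon>0}$; that is, there exist $\epsilon_0>0$ and $n_0\in\mathbb N$ such that for all $\epsilon\in\,]0,\epsilon_0[$ and $n\ge n_0$, $\mu_G\big((P^-_\Theta A_nU^+_{\mathcal D'})^{+\epsilon}\big)\le\mu_G\big((P^-_\Theta A_nU^+_{\mathcal D'})^{-\epsilon}\big)$.
   Context: $K_\omega$ is the completion of a global function field over $\mathbb F_q$ at a normalized discrete valuation $\omega$; $\mathcal O_\omega$ is its valuation ring, $\pi_\omega$ a fixed uniformizer, $q_\omega$ the order of the residue field, $|x|_\omega=q_\omega^{-\omega(x)}$. $K_\omega^2$ carries the supremum norm $\|(x,y)\|_\omega=\max\{|x|_\omega,|y|_\omega\}$ and $\mathbb S^1_\omega$ is its unit sphere; balls are for the induced ultrametric. $G=\mathrm{SL}_2(K_\omega)$ with Haar measure $\mu_G$. $P^-$ is the lower triangular subgroup, $P^-(\mathcal O_\omega)=P^-\cap\mathcal M_2(\mathcal O_\omega)$; $P^-_\Theta$ is the set of elements of $P^-(\mathcal O_\omega)$ whose first column lies in $\Theta$; $A_n=\{\mathrm{diag}(\pi_\omega^{-n},\pi_\omega^n)\}$; $U^+_{\mathcal D'}=\{\begin{pmatrix}1&\gamma\\0&1\end{pmatrix}:\gamma\in\mathcal D'\}$. For $\epsilon>0$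 let $N_\epsilon=\lfloor-\log_{q_\omega}\epsilon\rfloor$, and let $\mathcal V_\epsilon=\mathrm{SL}_2(\mathcal O_\omega)$ if $\epsilon>1/q_\omega$, and otherwise $\mathcal V_\epsilon=\ker(\mathrm{SL}_2(\mathcal O_\omega)\to\mathrm{SL}_2(\mathcal O_\omega/\pi_\omega^{N_\epsilon}\mathcal O_\omega))$. For $\mathcal B\subset G$: $\mathcal B^{+\epsilon}=\mathcal V_\epsilon\mathcal B\mathcal V_\epsilon=\bigcup_{g,h\in\mathcal V_\epsilon}g\mathcal Bh$ and $\mathcal B^{-\epsilon}=\bigcap_{g,h\in\mathcal V_\epsilon}g\mathcal Bh$. *)

theory Defs
  imports "HOL-Analysis.Analysis" "HOL-Computational_Algebra.Formal_Laurent_Series"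
begin

(* The local field K_omega is modelled as the Laurent series field 'k fls over a
   finite field 'k (the residue field, of order q_omega = CARD('k)); the normalized
   discrete valuation is fls_subdegree. *)

type_synonym 'k mat2 = "'k fls ^ 2 ^ 2"

definition absv :: "'k::{finite,field} fls \<Rightarrow> real" where
  "absv x = (if x = 0 then 0 else real CARD('k) powr (- real_of_int (fls_subdegree x)))"

definition valring :: "'k::{finite,field} fls set" where
  "valring = {x. absv x \<le> 1}"

definition norm2 :: "'k::{finite,field} fls \<times> 'k fls \<Rightarrow> real" where
  "norm2 v = max (absv (fst v)) (absv (snd v))"

definition sphere1 :: "('k::{finite,field} fls \<times> 'k fls) set" where
  "sphere1 = {v. norm2 v = 1}"

definition is_sphere_ball :: "('k::{finite,field} fls \<times> 'k fls) set \<Rightarrow> real \<Rightarrow> bool" where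
  "is_sphere_ball \<Theta> r \<longleftrightarrow> r > 0 \<and>
     (\<exists>c\<in>sphere1. \<Theta> = {v\<in>sphere1. norm2 (fst v - fst c, snd v - snd c) < r})"

definition is_field_ball :: "'k::{finite,field} fls set \<Rightarrow> real \<Rightarrow> bool" where
  "is_field_ball D r \<longleftrightarrow> r > 0 \<and> (\<exists>c. D = {x. absv (x - c) < r})"

definition SL2 :: "'k::{finite,field} mat2 set" where
  "SL2 = {g. det g = 1}"

definition SL2O :: "'k::{finite,field} mat2 set" where
  "SL2O = {g\<in>SL2. \<forall>i j. g$i$j \<in> valring}"

definition matdist :: "'k::{finite,field} mat2 \<Rightarrow> 'k mat2 \<Rightarrow> real" where
  "matdist g h = Max {absv (g$i$j - h$i$j) | i j. True}"

definition SL2_top :: "'k::{finite,field} mat2 topology" where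
  "SL2_top = Metric_space.mtopology SL2 matdist"

(* Haar measures on G: left-invariant Borel measures, finite on compact sets and
   positive on non-empty open sets (G is second countable, locally compact,
   so such measures are automatically Radon). *)
definition haar_SL2 :: "'k::{finite,field} mat2 measure \<Rightarrow> bool" where
  "haar_SL2 \<mu> \<longleftrightarrow>
     space \<mu> = SL2 \<and> sets \<mu> = sigma_sets SL2 {U. openin SL2_top U} \<and>
     (\<forall>g\<in>SL2. \<forall>A\<in>sets \<mu>. emeasure \<mu> ((\<lambda>h. g ** h) ` A) = emeasure \<mu> A) \<and>
     (\<forall>C. compactin SL2_top C \<longrightarrow> emeasure \<mu> C < \<infinity>) \<and>
     (\<forall>U. openin SL2_top U \<and> U \<noteq> {} \<longrightarrow> emeasure \<mu> U > 0)"

definition uniformizer :: "'k::{finite,field} fls \<Rightarrow> bool" where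
  "uniformizer \<pi> \<longleftrightarrow> fls_subdegree \<pi> = 1 \<and> \<pi> \<noteq> 0"

definition Pminus_Theta :: "('k::{finite,field} fls \<times> 'k fls) set \<Rightarrow> 'k mat2 set" where
  "Pminus_Theta \<Theta> = {g\<in>SL2O. g$1$2 = 0 \<and> (g$1$1, g$2$1) \<in> \<Theta>}"

definition a_n :: "'k::{finite,field} fls \<Rightarrow> nat \<Rightarrow> 'k mat2" where
  "a_n \<pi> n = (\<chi> i j. if i = j then (if i = 1 then inverse \<pi> ^ n else \<pi> ^ n) else 0)"

definition Uplus :: "'k::{finite,field} fls set \<Rightarrow> 'k mat2 set" where
  "Uplus D = {(\<chi> i j. if i = j then 1 else if i = 1 \<and> j = 2 then \<gamma> else 0) | \<gamma>. \<gamma> \<in> D}"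

definition PAU :: "'k::{finite,field} fls \<Rightarrow> ('k fls \<times> 'k fls) set \<Rightarrow> 'k fls set \<Rightarrow> nat \<Rightarrow> 'k mat2 set" where
  "PAU \<pi> \<Theta> D n = {p ** a_n \<pi> n ** u | p u. p \<in> Pminus_Theta \<Theta> \<and> u \<in> Uplus D}"

definition N_eps :: "'k::{finite,field} itself \<Rightarrow> real \<Rightarrow> int" where
  "N_eps _ \<epsilon> = \<lfloor>- log (real CARD('k)) \<epsilon>\<rfloor>"

definition V_eps :: "real \<Rightarrow> 'k::{finite,field} mat2 set" where
  "V_eps \<epsilon> = (if \<epsilon> > 1 / real CARD('k) then SL2O
     else {g\<in>SL2O. \<forall>i j. fls_subdegree (g$i$j - (if i = j then 1 else 0)) \<ge> N_eps TYPE('k) \<epsilon>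
                          \<or> g$i$j - (if i = j then 1 else 0) = 0})"

definition thicken :: "real \<Rightarrow> 'k::{finite,field} mat2 set \<Rightarrow> 'k mat2 set" where
  "thicken \<epsilon> B = {g ** b ** h | g b h. g \<in> V_eps \<epsilon> \<and> b \<in> B \<and> h \<in> V_eps \<epsilon>}"

definition thin :: "real \<Rightarrow> 'k::{finite,field} mat2 set \<Rightarrow> 'k mat2 set" where
  "thin \<epsilon> B = {x. \<forall>g\<in>V_eps \<epsilon>. \<forall>h\<in>V_eps \<epsilon>. x \<in> (\<lambda>b. g ** b ** h) ` B}"

end

(*
  Writing g = p a_n u(gamma), the set P^-_Theta A_n U^+_D consists of the g with det g = 1 whose
  scaled first column pi^n (g11, g21) lies in Theta (and has a unit first entry) and whose
  first-row ratio g12 / g11 = gamma lies in D. Both balls are open in an ultrametric, so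
  multiplying g on the left or on the right by a matrix within delta of the identity keeps
  it in the set as soon as R^2 delta < min r s, where R bounds D; the scaling by pi^n makes
  this uniform in n. For small epsilon, V_epsilon lies in that neighbourhood, so the set is
  V_epsilon-bi-invariant: its epsilon-thickening and epsilon-thinning both equal the set,
  and the inequality holds with equality for every measure.
*)
theory Submission
  imports Defs
begin

no_notation fps_nth (infixl \<open>$\<close> 75)

lemma card_field_ge_2: "real CARD('k::{finite,field}) \<ge> 2"
proof -
  have "card {0::'k, 1} \<le> CARD('k)" by (intro card_mono) auto
  thus ?thesis by simp
qed

lemma absv_0 [simp]: "absv (0::'k::{finite,field} fls) = 0"
  by (simp add: absv_def)

lemma absv_nonneg [simp]: "absv (x::'k::{finite,field} fls) \<ge> 0"
  by (simp add: absv_def)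

lemma absv_eq_0_iff [simp]: "absv (x::'k::{finite,field} fls) = 0 \<longleftrightarrow> x = 0"
  using card_field_ge_2[where 'k='k] by (simp add: absv_def)

lemma absv_1 [simp]: "absv (1::'k::{finite,field} fls) = 1"
  by (simp add: absv_def)

lemma absv_uminus [simp]: "absv (- x::'k::{finite,field} fls) = absv x"
  by (simp add: absv_def)

lemma absv_mult: "absv (x * y::'k::{finite,field} fls) = absv x * absv y"
  using card_field_ge_2[where 'k='k]
  by (auto simp add: absv_def powr_add[symmetric] algebra_simps)

lemma absv_inverse: "absv (inverse x::'k::{finite,field} fls) = inverse (absv x)"
proof (cases "x = 0")
  case False
  hence "absv (inverse x) * absv x = 1" by (simp flip: absv_mult)
  thus ?thesis by (metis inverse_unique mult.commute)
qed simp

lemma absv_divide: "absv (x / y::'k::{finite,field} fls) = absv x / absv y"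
  by (simp add: divide_inverse absv_mult absv_inverse)

lemma absv_power: "absv (x ^ n::'k::{finite,field} fls) = absv x ^ n"
  by (induction n) (auto simp: absv_mult)

lemma absv_ultrametric: "absv (x + y::'k::{finite,field} fls) \<le> max (absv x) (absv y)"
proof (cases "x = 0 \<or> y = 0 \<or> x + y = 0")
  case False
  hence sub: "fls_subdegree (x + y) \<ge> min (fls_subdegree x) (fls_subdegree y)"
    by (intro fls_plus_subdegree) auto
  have "real CARD('k) > 1" using card_field_ge_2[where 'k='k] by linarith
  with False sub show ?thesis
    by (cases "fls_subdegree x \<le> fls_subdegree y") (auto simp: absv_def le_max_iff_disj)
qed (auto simp: le_max_iff_disj)

lemma absv_add_le: "absv x \<le> e \<Longrightarrow> absv y \<le> e \<Longrightarrow> absv (x + y::'k::{finite,field} fls) \<le> e"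
  using absv_ultrametric[of x y] by linarith

lemma absv_diff_le: "absv x \<le> e \<Longrightarrow> absv y \<le> e \<Longrightarrow> absv (x - y::'k::{finite,field} fls) \<le> e"
  using absv_add_le[of x e "- y"] by simp

lemma absv_mult_le: "absv x \<le> e \<Longrightarrow> absv y \<le> f \<Longrightarrow> 0 \<le> e \<Longrightarrow> absv (x * y::'k::{finite,field} fls) \<le> e * f"
  by (simp add: absv_mult mult_mono)

lemma absv_add_eq_of_less: "absv y < absv x \<Longrightarrow> absv (x + y::'k::{finite,field} fls) = absv x"
  using absv_ultrametric[of x y] absv_ultrametric[of "x + y" "- y"] by auto

lemma absv_eq_1_of_close: "absv (x::'k::{finite,field} fls) = 1 \<Longrightarrow> absv (y - x) < 1 \<Longrightarrow> absv y = 1"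
  using absv_add_eq_of_less[of "y - x" x] by simp

lemma absv_ge_1_of_mult_eq_1: "absv (a::'k::{finite,field} fls) \<le> 1 \<Longrightarrow> absv (a * x) = 1 \<Longrightarrow> absv x \<ge> 1"
  using mult_right_mono[of "absv a" 1 "absv x"] by (simp add: absv_mult)

lemma absv_uniformizer_power_le_1:
  fixes \<pi> :: "'k::{finite,field} fls"
  assumes "uniformizer \<pi>"
  shows "absv (\<pi> ^ n) \<le> 1"
proof -
  have "absv \<pi> = 1 / real CARD('k)"
    using assms by (simp add: uniformizer_def absv_def powr_minus inverse_eq_divide)
  thus ?thesis using card_field_ge_2[where 'k='k] by (simp add: absv_power power_le_one)
qed

lemma absv_le_of_subdegree_ge:
  fixes x :: "'k::{finite,field} fls"
  assumes "fls_subdegree x \<ge> int N \<or> x = 0"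
  shows "absv x \<le> (1 / real CARD('k)) ^ N"
proof (cases "x = 0")
  case False
  have q: "real CARD('k) \<ge> 2" by (rule card_field_ge_2)
  have "absv x = real CARD('k) powr (- real_of_int (fls_subdegree x))"
    using False by (simp add: absv_def)
  also have "\<dots> \<le> real CARD('k) powr (- real N)"
    using assms False q by (intro powr_mono) auto
  also have "\<dots> = (1 / real CARD('k)) ^ N"
    using q by (simp add: powr_minus powr_realpow power_one_over inverse_eq_divide)
  finally show ?thesis .
qed simp

lemma matrix_mult_2_nth: "((A::'a::semiring_1^2^'m) ** B) $ i $ j = A$i$1 * B$1$j + A$i$2 * B$2$j"
  by (simp add: matrix_matrix_mult_def sum_2)

lemma mat2_eqI:
  "A$1$1 = B$1$1 \<Longrightarrow> A$1$2 = B$1$2 \<Longrightarrow> A$2$1 = B$2$1 \<Longrightarrow> A$2$2 = B$2$2 \<Longrightarrow> A = (B::'a^2^2)"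
  by (simp add: vec_eq_iff forall_2)

definition mat2 :: "'a \<Rightarrow> 'a \<Rightarrow> 'a \<Rightarrow> 'a \<Rightarrow> 'a^2^2" where
  "mat2 a b c d = (\<chi> i j. if i = 1 then (if j = 1 then a else b) else (if j = 1 then c else d))"

lemma mat2_nth [simp]:
  "mat2 a b c d $ 1 $ 1 = a" "mat2 a b c d $ 1 $ 2 = b"
  "mat2 a b c d $ 2 $ 1 = c" "mat2 a b c d $ 2 $ 2 = d"
  by (simp_all add: mat2_def)

definition adj2 :: "'a::comm_ring_1^2^2 \<Rightarrow> 'a^2^2" where
  "adj2 k = mat2 (k$2$2) (- k$1$2) (- k$2$1) (k$1$1)"

lemma adj2_mult:
  fixes k :: "'a::comm_ring_1^2^2"
  assumes "det k = 1"
  shows "k ** adj2 k = mat 1" "adj2 k ** k = mat 1"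
  using assms by (auto intro!: mat2_eqI simp: matrix_mult_2_nth adj2_def det_2 mat_def algebra_simps)

lemma a_n_nth [simp]:
  "a_n \<pi> n $ 1 $ 1 = inverse \<pi> ^ n" "a_n \<pi> n $ 1 $ 2 = 0"
  "a_n \<pi> n $ 2 $ 1 = 0" "a_n \<pi> n $ 2 $ 2 = \<pi> ^ n"
  by (simp_all add: a_n_def)

definition upper_unipotent :: "'a::zero_neq_one \<Rightarrow> 'a^2^2" where
  "upper_unipotent \<gamma> = mat2 1 \<gamma> 0 1"

lemma Uplus_eq: "Uplus D = upper_unipotent ` D"
proof -
  have "(\<chi> i j. if i = j then 1 else if i = 1 \<and> j = 2 then \<gamma> else 0) = upper_unipotent \<gamma>"
    for \<gamma> :: "'k::{finite,field} fls"
    by (rule mat2_eqI) (simp_all add: upper_unipotent_def)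
  thus ?thesis by (auto simp: Uplus_def)
qed

lemma sphere1_absv_le_1: "v \<in> sphere1 \<Longrightarrow> absv (fst v) \<le> 1 \<and> absv (snd v) \<le> 1"
  by (auto simp: sphere1_def norm2_def)

text \<open>Explicit coordinates on \<open>P\<^sup>-\<^sub>\<Theta> A\<^sub>n U\<^sup>+\<^sub>D\<close>: the first column of
  \<open>p a\<^sub>n u\<close> is \<open>\<pi>\<^sup>-\<^sup>n\<close> times that of \<open>p\<close>, and the ratio of the first row is the
  unipotent parameter \<open>\<gamma>\<close>.\<close>

definition PAU_coords :: "'k::{finite,field} fls \<Rightarrow> ('k fls \<times> 'k fls) set \<Rightarrow> 'k fls set \<Rightarrow> nat \<Rightarrow> 'k mat2 set" where
  "PAU_coords \<pi> \<Theta> D n = {g. det g = 1 \<and> absv (\<pi>^n * g$1$1) = 1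
      \<and> (\<pi>^n * g$1$1, \<pi>^n * g$2$1) \<in> \<Theta> \<and> g$1$2 / g$1$1 \<in> D}"

lemma PAU_subset_PAU_coords:
  fixes \<pi> :: "'k::{finite,field} fls"
  assumes pi: "uniformizer \<pi>"
  shows "PAU \<pi> \<Theta> D n \<subseteq> PAU_coords \<pi> \<Theta> D n"
proof
  fix g assume "g \<in> PAU \<pi> \<Theta> D n"
  then obtain p \<gamma> where g: "g = p ** a_n \<pi> n ** upper_unipotent \<gamma>"
    and p: "p \<in> Pminus_Theta \<Theta>" and \<gamma>: "\<gamma> \<in> D"
    unfolding PAU_def Uplus_eq by blast
  have p12: "p$1$2 = 0" and pTh: "(p$1$1, p$2$1) \<in> \<Theta>" and pO: "p \<in> SL2O"
    using p by (auto simp: Pminus_Theta_def)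
  have det_p: "p$1$1 * p$2$2 = 1"
    using pO p12 by (simp add: SL2O_def SL2_def det_2)
  have "absv (p$1$1) \<le> 1" "absv (p$2$2) \<le> 1" using pO by (auto simp: SL2O_def valring_def)
  hence ap: "absv (p$1$1) = 1"
    using absv_ge_1_of_mult_eq_1[of "p$2$2" "p$1$1"] det_p by (simp add: mult.commute)
  have pi0: "\<pi> \<noteq> 0" using pi by (simp add: uniformizer_def)
  have cancel: "\<pi> ^ n * (x * inverse \<pi> ^ n) = x" for x
    using pi0 by (simp add: power_mult_distrib[symmetric] field_simps)
  have "det (a_n \<pi> n) = 1" "det (upper_unipotent \<gamma>) = 1"
    using pi0 by (simp_all add: det_2 upper_unipotent_def power_mult_distrib[symmetric])
  hence "det g = 1"
    using pO unfolding g det_mul by (simp add: SL2O_def SL2_def)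
  moreover have "\<pi>^n * g$1$1 = p$1$1" "\<pi>^n * g$2$1 = p$2$1" "g$1$2 / g$1$1 = \<gamma>"
    using ap pi0 by (auto simp: g matrix_mult_2_nth upper_unipotent_def p12 cancel)
  ultimately show "g \<in> PAU_coords \<pi> \<Theta> D n"
    using ap pTh \<gamma> by (simp add: PAU_coords_def)
qed

lemma PAU_coords_subset_PAU:
  fixes \<pi> :: "'k::{finite,field} fls"
  assumes pi: "uniformizer \<pi>" and Th: "\<Theta> \<subseteq> sphere1"
  shows "PAU_coords \<pi> \<Theta> D n \<subseteq> PAU \<pi> \<Theta> D n"
proof
  fix g assume "g \<in> PAU_coords \<pi> \<Theta> D n"
  hence det_g: "det g = 1" and a1: "absv (\<pi>^n * g$1$1) = 1"
    and th: "(\<pi>^n * g$1$1, \<pi>^n * g$2$1) \<in> \<Theta>" and \<gamma>: "g$1$2 / g$1$1 \<in> D"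
    by (auto simp: PAU_coords_def)
  define p where "p = mat2 (\<pi>^n * g$1$1) 0 (\<pi>^n * g$2$1) (inverse (\<pi>^n * g$1$1))"
  have pi0: "\<pi> \<noteq> 0" using pi by (simp add: uniformizer_def)
  have g11: "g$1$1 \<noteq> 0" using a1 by auto
  have "p \<in> Pminus_Theta \<Theta>"
  proof -
    have "absv (inverse (\<pi>^n * g$1$1)) = 1"
      using a1 by (simp only: absv_inverse) simp
    hence "\<forall>i j. p$i$j \<in> valring"
      using a1 sphere1_absv_le_1[OF subsetD[OF Th th]]
      by (simp add: forall_2 p_def valring_def del: inverse_mult_distrib)
    thus ?thesis using th g11 pi0 by (simp add: Pminus_Theta_def SL2O_def SL2_def p_def det_2 field_simps)
  qed
  moreover have "g = p ** a_n \<pi> n ** upper_unipotent (g$1$2 / g$1$1)"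
  proof -
    have cancel: "\<pi> ^ n * x * inverse \<pi> ^ n = x" for x
      using pi0 by (simp add: power_mult_distrib[symmetric] field_simps)
    have g22: "g$2$2 = (1 + g$1$2 * g$2$1) / g$1$1"
      using det_g g11 by (simp add: det_2 field_simps)
    show ?thesis
      using g11 pi0
      by (intro mat2_eqI) (simp_all add: matrix_mult_2_nth upper_unipotent_def p_def cancel g22
          field_simps power_mult_distrib[symmetric])
  qed
  ultimately show "g \<in> PAU \<pi> \<Theta> D n"
    using \<gamma> unfolding PAU_def Uplus_eq by blast
qed

lemma PAU_eq_PAU_coords:
  fixes \<pi> :: "'k::{finite,field} fls"
  assumes "uniformizer \<pi>" and "\<Theta> \<subseteq> sphere1"
  shows "PAU \<pi> \<Theta> D n = PAU_coords \<pi> \<Theta> D n"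
  using PAU_subset_PAU_coords PAU_coords_subset_PAU assms by (metis subset_antisym)

lemma sphere_ball_perturb:
  fixes \<Theta> :: "('k::{finite,field} fls \<times> 'k fls) set"
  assumes Th: "is_sphere_ball \<Theta> r" "r < 1" and v: "(v1, v2) \<in> \<Theta>"
    and close: "absv (w1 - v1) < r" "absv (w2 - v2) < r"
  shows "(w1, w2) \<in> \<Theta>"
proof -
  obtain c where Th_eq: "\<Theta> = {v\<in>sphere1. norm2 (fst v - fst c, snd v - snd c) < r}"
    using Th(1) by (auto simp: is_sphere_ball_def)
  have v_norm: "max (absv v1) (absv v2) = 1"
    and vc: "absv (v1 - fst c) < r" "absv (v2 - snd c) < r"
    using v by (auto simp: Th_eq sphere1_def norm2_def)
  have "absv w1 \<le> 1" "absv w2 \<le> 1"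
    using absv_ultrametric[of v1 "w1 - v1"] absv_ultrametric[of v2 "w2 - v2"] v_norm close Th(2)
    by auto
  moreover have "absv v1 = 1 \<or> absv v2 = 1"
    using v_norm by (metis max_def)
  hence "absv w1 = 1 \<or> absv w2 = 1"
    using absv_eq_1_of_close[of v1 w1] absv_eq_1_of_close[of v2 w2] close Th(2) by force
  ultimately have "norm2 (w1, w2) = 1" by (auto simp: norm2_def max_def)
  moreover have "absv (w1 - fst c) < r" "absv (w2 - snd c) < r"
    using absv_ultrametric[of "w1 - v1" "v1 - fst c"] absv_ultrametric[of "w2 - v2" "v2 - snd c"]
      close vc by simp_all
  ultimately show ?thesis by (simp add: Th_eq sphere1_def norm2_def)
qed

lemma field_ball_perturb:
  fixes D :: "'k::{finite,field} fls set"
  assumes "is_field_ball D s" "x \<in> D" "absv (y - x) < s"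
  shows "y \<in> D"
proof -
  obtain c where D: "D = {x. absv (x - c) < s}" using assms(1) by (auto simp: is_field_ball_def)
  show ?thesis using absv_ultrametric[of "y - x" "x - c"] assms(2,3) by (auto simp: D)
qed

lemma field_ball_bounded:
  fixes D :: "'k::{finite,field} fls set"
  assumes "is_field_ball D s" "s < 1"
  obtains R where "R \<ge> 1" "\<forall>x\<in>D. absv x \<le> R"
proof -
  obtain c where D: "D = {x. absv (x - c) < s}" using assms(1) by (auto simp: is_field_ball_def)
  have "absv x \<le> max 1 (absv c)" if "x \<in> D" for x
    using absv_ultrametric[of "x - c" c] that assms(2) by (auto simp: D)
  thus ?thesis using that[of "max 1 (absv c)"] by auto
qed

lemma PAU_coords_absv:
  fixes \<pi> :: "'k::{finite,field} fls"
  assumes "uniformizer \<pi>" "\<Theta> \<subseteq> sphere1" "g \<in> PAU_coords \<pi> \<Theta> D n"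
  shows "absv (g$1$1) \<ge> 1" "absv (\<pi>^n * g$2$1) \<le> 1"
proof -
  have g: "absv (\<pi>^n * g$1$1) = 1" "(\<pi>^n * g$1$1, \<pi>^n * g$2$1) \<in> \<Theta>"
    using assms(3) by (auto simp: PAU_coords_def)
  show "absv (g$1$1) \<ge> 1"
    using absv_ge_1_of_mult_eq_1[OF absv_uniformizer_power_le_1[OF assms(1)] g(1)] .
  show "absv (\<pi>^n * g$2$1) \<le> 1"
    using sphere1_absv_le_1[OF subsetD[OF assms(2) g(2)]] by simp
qed

lemma PAU_coords_perturb:
  fixes \<pi> :: "'k::{finite,field} fls"
  assumes Th: "is_sphere_ball \<Theta> r" "r < 1" and Dd: "is_field_ball D s"
    and g: "g \<in> PAU_coords \<pi> \<Theta> D n" and det: "det g' = 1"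
    and col1: "absv (\<pi>^n * g'$1$1 - \<pi>^n * g$1$1) < r"
    and col2: "absv (\<pi>^n * g'$2$1 - \<pi>^n * g$2$1) < r"
    and ratio: "absv (g'$1$2 / g'$1$1 - g$1$2 / g$1$1) < s"
  shows "g' \<in> PAU_coords \<pi> \<Theta> D n"
proof -
  have th: "(\<pi>^n * g$1$1, \<pi>^n * g$2$1) \<in> \<Theta>" and a1: "absv (\<pi>^n * g$1$1) = 1"
    using g by (simp_all add: PAU_coords_def)
  have "(\<pi>^n * g'$1$1, \<pi>^n * g'$2$1) \<in> \<Theta>"
    using sphere_ball_perturb[OF Th th col1 col2] .
  moreover have "absv (\<pi>^n * g'$1$1) = 1"
    using absv_eq_1_of_close[OF a1] col1 Th(2) by simp
  moreover have "g'$1$2 / g'$1$1 \<in> D"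
    using g field_ball_perturb[OF Dd _ ratio] by (simp add: PAU_coords_def)
  ultimately show ?thesis using det by (simp add: PAU_coords_def)
qed

lemma mult_left_ratio_diff:
  fixes k g :: "'a::field^2^2"
  assumes "(k ** g)$1$1 \<noteq> 0" "g$1$1 \<noteq> 0"
  shows "(k ** g)$1$2 / (k ** g)$1$1 - g$1$2 / g$1$1 = k$1$2 * det g / ((k ** g)$1$1 * g$1$1)"
proof -
  have "(k ** g)$1$2 * g$1$1 - g$1$2 * (k ** g)$1$1 = k$1$2 * det g"
    by (simp add: matrix_mult_2_nth det_2 algebra_simps)
  thus ?thesis using assms by (simp add: diff_frac_eq)
qed

lemma mult_right_ratio_diff:
  fixes g h :: "'a::field^2^2"
  assumes "g$1$2 = \<gamma> * g$1$1" "g$1$1 \<noteq> 0" "h$1$1 + \<gamma> * h$2$1 \<noteq> 0"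
  shows "(g ** h)$1$2 / (g ** h)$1$1 - \<gamma> =
    (h$1$2 + \<gamma> * (h$2$2 - 1) - \<gamma> * (h$1$1 - 1) - \<gamma> * \<gamma> * h$2$1) / (h$1$1 + \<gamma> * h$2$1)"
proof -
  have "(g ** h)$1$1 = g$1$1 * (h$1$1 + \<gamma> * h$2$1)" "(g ** h)$1$2 = g$1$1 * (h$1$2 + \<gamma> * h$2$2)"
    using assms(1) by (simp_all add: matrix_mult_2_nth algebra_simps)
  hence "(g ** h)$1$2 / (g ** h)$1$1 = (h$1$2 + \<gamma> * h$2$2) / (h$1$1 + \<gamma> * h$2$1)"
    using assms(2) by simp
  thus ?thesis using assms(3) by (simp add: field_simps)
qed

definition near_one :: "real \<Rightarrow> 'k::{finite,field} mat2 \<Rightarrow> bool" where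
  "near_one \<delta> k \<longleftrightarrow> det k = 1 \<and> absv (k$1$1 - 1) \<le> \<delta> \<and> absv (k$1$2) \<le> \<delta>
      \<and> absv (k$2$1) \<le> \<delta> \<and> absv (k$2$2 - 1) \<le> \<delta>"

lemma near_one_nonneg: "near_one \<delta> k \<Longrightarrow> \<delta> \<ge> 0"
  using absv_nonneg[of "k$1$2"] unfolding near_one_def by linarith

lemma near_one_adj2: "near_one \<delta> k \<Longrightarrow> near_one \<delta> (adj2 k)"
  by (simp add: near_one_def adj2_def det_2 mult.commute)

lemma near_one_le_scaled:
  assumes "near_one \<delta> k" "R \<ge> 1"
  shows "\<delta> \<le> R * \<delta>" "R * \<delta> \<le> R * R * \<delta>" "\<delta> \<le> R * R * \<delta>"
proof -
  show "\<delta> \<le> R * \<delta>" using mult_right_mono[OF assms(2) near_one_nonneg[OF assms(1)]] by simp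
  moreover show "R * \<delta> \<le> R * R * \<delta>"
    using mult_left_mono[OF \<open>\<delta> \<le> R * \<delta>\<close>] assms(2) by (simp add: mult.assoc)
  ultimately show "\<delta> \<le> R * R * \<delta>" by simp
qed

lemma near_one_mult_vec_diff:
  assumes k: "near_one \<delta> k" and "absv a \<le> 1" "absv b \<le> 1"
  shows "absv (k$1$1 * a + k$1$2 * b - a) \<le> \<delta>" "absv (k$2$1 * a + k$2$2 * b - b) \<le> \<delta>"
proof -
  have kk: "absv (k$1$1 - 1) \<le> \<delta>" "absv (k$1$2) \<le> \<delta>" "absv (k$2$1) \<le> \<delta>" "absv (k$2$2 - 1) \<le> \<delta>"
    using k by (auto simp: near_one_def)
  note \<delta>0 = near_one_nonneg[OF k]
  have eq: "k$1$1 * a + k$1$2 * b - a = (k$1$1 - 1) * a + k$1$2 * b"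
    "k$2$1 * a + k$2$2 * b - b = k$2$1 * a + (k$2$2 - 1) * b"
    by (simp_all add: algebra_simps)
  show "absv (k$1$1 * a + k$1$2 * b - a) \<le> \<delta>"
    unfolding eq(1) using absv_mult_le[OF kk(1) assms(2) \<delta>0] absv_mult_le[OF kk(2) assms(3) \<delta>0]
    by (intro absv_add_le) simp_all
  show "absv (k$2$1 * a + k$2$2 * b - b) \<le> \<delta>"
    unfolding eq(2) using absv_mult_le[OF kk(3) assms(2) \<delta>0] absv_mult_le[OF kk(4) assms(3) \<delta>0]
    by (intro absv_add_le) simp_all
qed

lemma near_one_row_shift:
  assumes h: "near_one \<delta> h" and \<gamma>: "absv \<gamma> \<le> R" and R: "R \<ge> 1"
  shows "absv (h$1$1 + \<gamma> * h$2$1 - 1) \<le> R * R * \<delta>"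
    and "absv (h$1$2 + \<gamma> * (h$2$2 - 1) - \<gamma> * (h$1$1 - 1) - \<gamma> * \<gamma> * h$2$1) \<le> R * R * \<delta>"
proof -
  have hh: "absv (h$1$1 - 1) \<le> \<delta>" "absv (h$1$2) \<le> \<delta>" "absv (h$2$1) \<le> \<delta>" "absv (h$2$2 - 1) \<le> \<delta>"
    using h by (auto simp: near_one_def)
  note \<delta> = near_one_le_scaled[OF h R]
  have R0: "0 \<le> R" using R by simp
  have "absv (h$1$1 - 1 + \<gamma> * h$2$1) \<le> R * R * \<delta>"
    using absv_mult_le[OF \<gamma> hh(3) R0] hh(1) \<delta> by (intro absv_add_le) linarith+
  thus "absv (h$1$1 + \<gamma> * h$2$1 - 1) \<le> R * R * \<delta>" by (simp add: algebra_simps)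
  show "absv (h$1$2 + \<gamma> * (h$2$2 - 1) - \<gamma> * (h$1$1 - 1) - \<gamma> * \<gamma> * h$2$1) \<le> R * R * \<delta>"
    using hh(2) \<delta> absv_mult_le[OF \<gamma> hh(4) R0] absv_mult_le[OF \<gamma> hh(1) R0]
      absv_mult_le[OF absv_mult_le[OF \<gamma> \<gamma> R0] hh(3) mult_nonneg_nonneg[OF R0 R0]]
    by (intro absv_diff_le absv_add_le) linarith+
qed

lemma PAU_coords_mult_left:
  fixes \<pi> :: "'k::{finite,field} fls"
  assumes pi: "uniformizer \<pi>" and Th: "is_sphere_ball \<Theta> r" "r < 1" and Dd: "is_field_ball D s"
    and k: "near_one \<delta> k" and \<delta>: "\<delta> < r" "\<delta> < s" and g: "g \<in> PAU_coords \<pi> \<Theta> D n"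
  shows "k ** g \<in> PAU_coords \<pi> \<Theta> D n"
proof -
  have Ths: "\<Theta> \<subseteq> sphere1" using Th(1) by (auto simp: is_sphere_ball_def)
  note g_absv = PAU_coords_absv[OF pi Ths g]
  have det_g: "det g = 1" and a1: "absv (\<pi>^n * g$1$1) = 1"
    using g by (auto simp: PAU_coords_def)
  have kk: "det k = 1" "absv (k$1$2) \<le> \<delta>"
    using k by (auto simp: near_one_def)
  have "\<pi>^n * (k ** g)$1$1 = k$1$1 * (\<pi>^n * g$1$1) + k$1$2 * (\<pi>^n * g$2$1)"
    "\<pi>^n * (k ** g)$2$1 = k$2$1 * (\<pi>^n * g$1$1) + k$2$2 * (\<pi>^n * g$2$1)"
    by (simp_all add: matrix_mult_2_nth algebra_simps)
  hence col: "absv (\<pi>^n * (k ** g)$1$1 - \<pi>^n * g$1$1) \<le> \<delta>"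
    "absv (\<pi>^n * (k ** g)$2$1 - \<pi>^n * g$2$1) \<le> \<delta>"
    using near_one_mult_vec_diff[OF k eq_refl[OF a1] g_absv(2)] by simp_all
  have "absv (\<pi>^n * (k ** g)$1$1) = 1"
    using absv_eq_1_of_close[OF a1] col(1) \<delta> Th(2) by simp
  hence kg11: "absv ((k ** g)$1$1) \<ge> 1"
    by (rule absv_ge_1_of_mult_eq_1[OF absv_uniformizer_power_le_1[OF pi]])
  have "absv (k$1$2) / absv ((k ** g)$1$1 * g$1$1) \<le> absv (k$1$2) / 1"
    using mult_mono[OF kg11 g_absv(1)] by (intro divide_left_mono) (auto simp: absv_mult)
  moreover have "(k ** g)$1$1 \<noteq> 0" "g$1$1 \<noteq> 0" using kg11 g_absv(1) by auto
  ultimately have ratio: "absv ((k ** g)$1$2 / (k ** g)$1$1 - g$1$2 / g$1$1) \<le> \<delta>"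
    using mult_left_ratio_diff[of k g] det_g kk(2) by (simp add: absv_divide)
  show ?thesis
    using PAU_coords_perturb[OF Th Dd g] col ratio \<delta> by (simp add: det_mul det_g kk(1))
qed

lemma PAU_coords_absv_22:
  fixes \<pi> :: "'k::{finite,field} fls"
  assumes pi: "uniformizer \<pi>" and Th: "\<Theta> \<subseteq> sphere1" and g: "g \<in> PAU_coords \<pi> \<Theta> D n"
    and R: "R \<ge> 1" "absv (g$1$2 / g$1$1) \<le> R"
  shows "absv (\<pi>^n * g$2$2) \<le> R"
proof -
  note g_absv = PAU_coords_absv[OF pi Th g]
  have "g$1$1 * g$2$2 - g$1$2 * g$2$1 = 1" using g by (simp add: PAU_coords_def det_2)
  moreover have "g$1$1 \<noteq> 0" using g_absv(1) by auto
  ultimately have "\<pi>^n * g$2$2 = \<pi>^n / g$1$1 + g$1$2 / g$1$1 * (\<pi>^n * g$2$1)"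
    by (simp add: field_simps)
  moreover have "absv (\<pi>^n / g$1$1) \<le> R"
  proof -
    have "1 \<le> R * absv (g$1$1)" using mult_mono[of 1 R 1 "absv (g$1$1)"] R(1) g_absv(1) by simp
    thus ?thesis using absv_uniformizer_power_le_1[OF pi, of n] g_absv(1)
      by (simp add: absv_divide divide_le_eq)
  qed
  moreover have "absv (g$1$2 / g$1$1 * (\<pi>^n * g$2$1)) \<le> R"
    using absv_mult_le[OF R(2) g_absv(2)] R(1) by simp
  ultimately show ?thesis by (simp add: absv_add_le)
qed

lemma PAU_coords_mult_right:
  fixes \<pi> :: "'k::{finite,field} fls"
  assumes pi: "uniformizer \<pi>" and Th: "is_sphere_ball \<Theta> r" "r < 1" and Dd: "is_field_ball D s"
    and R: "R \<ge> 1" "\<forall>x\<in>D. absv x \<le> R" and h: "near_one \<delta> h"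
    and \<delta>: "R * R * \<delta> < r" "R * R * \<delta> < s" and g: "g \<in> PAU_coords \<pi> \<Theta> D n"
  shows "g ** h \<in> PAU_coords \<pi> \<Theta> D n"
proof -
  have Ths: "\<Theta> \<subseteq> sphere1" using Th(1) by (auto simp: is_sphere_ball_def)
  note g_absv = PAU_coords_absv[OF pi Ths g]
  have det_g: "det g = 1" and a1: "absv (\<pi>^n * g$1$1) = 1"
    using g by (auto simp: PAU_coords_def)
  have hh: "det h = 1" "absv (h$1$1 - 1) \<le> \<delta>" "absv (h$2$1) \<le> \<delta>"
    using h by (auto simp: near_one_def)
  define \<gamma> where "\<gamma> = g$1$2 / g$1$1"
  have \<gamma>R: "absv \<gamma> \<le> R" using R(2) g by (simp add: \<gamma>_def PAU_coords_def)
  have g11: "g$1$1 \<noteq> 0" using g_absv(1) by auto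
  hence g12: "g$1$2 = \<gamma> * g$1$1" by (simp add: \<gamma>_def)
  define t where "t = h$1$1 + \<gamma> * h$2$1"
  note shift = near_one_row_shift[OF h \<gamma>R R(1), folded t_def]
  have "absv (t - 1) < 1" using shift(1) \<delta> Th(2) by linarith
  hence t1: "absv t = 1" by (rule absv_eq_1_of_close[OF absv_1])
  have col1: "absv (\<pi>^n * (g ** h)$1$1 - \<pi>^n * g$1$1) \<le> R * R * \<delta>"
  proof -
    have "\<pi>^n * (g ** h)$1$1 - \<pi>^n * g$1$1 = (\<pi>^n * g$1$1) * (t - 1)"
      by (simp add: matrix_mult_2_nth t_def g12 algebra_simps)
    thus ?thesis using a1 shift(1) by (simp add: absv_mult)
  qed
  have col2: "absv (\<pi>^n * (g ** h)$2$1 - \<pi>^n * g$2$1) \<le> R * R * \<delta>"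
  proof -
    have "absv (\<pi>^n * g$2$2) \<le> R"
      using PAU_coords_absv_22[OF pi Ths g R(1)] \<gamma>R by (simp add: \<gamma>_def)
    hence "absv ((\<pi>^n * g$2$1) * (h$1$1 - 1)) \<le> R * R * \<delta>"
      and "absv ((\<pi>^n * g$2$2) * h$2$1) \<le> R * R * \<delta>"
      using absv_mult_le[OF g_absv(2) hh(2)] absv_mult_le[OF _ hh(3), of "\<pi>^n * g$2$2" R] R(1)
        near_one_le_scaled[OF h R(1)] by linarith+
    moreover have "\<pi>^n * (g ** h)$2$1 - \<pi>^n * g$2$1 = (\<pi>^n * g$2$1) * (h$1$1 - 1) + (\<pi>^n * g$2$2) * h$2$1"
      by (simp add: matrix_mult_2_nth algebra_simps)
    ultimately show ?thesis by (simp add: absv_add_le)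
  qed
  have "t \<noteq> 0" using t1 by auto
  hence "absv ((g ** h)$1$2 / (g ** h)$1$1 - \<gamma>) \<le> R * R * \<delta>"
    using mult_right_ratio_diff[OF g12 g11] t1 shift(2) by (simp add: t_def absv_divide)
  thus ?thesis
    using PAU_coords_perturb[OF Th Dd g] col1 col2 \<delta> by (simp add: det_mul det_g hh(1) \<gamma>_def)
qed

lemma PAU_coords_bi_invariant:
  fixes \<pi> :: "'k::{finite,field} fls"
  assumes pi: "uniformizer \<pi>" and Th: "is_sphere_ball \<Theta> r" "r < 1" and Dd: "is_field_ball D s"
    and R: "R \<ge> 1" "\<forall>x\<in>D. absv x \<le> R" and \<delta>: "R * R * \<delta> < r" "R * R * \<delta> < s"
    and k: "near_one \<delta> k" and h: "near_one \<delta> h" and g: "g \<in> PAU_coords \<pi> \<Theta> D n"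
  shows "k ** g ** h \<in> PAU_coords \<pi> \<Theta> D n"
proof -
  have "k ** g \<in> PAU_coords \<pi> \<Theta> D n"
    using PAU_coords_mult_left[OF pi Th Dd k _ _ g] near_one_le_scaled(3)[OF k R(1)] \<delta> by linarith
  thus ?thesis by (rule PAU_coords_mult_right[OF pi Th Dd R h \<delta>])
qed

lemma V_eps_near_one:
  assumes "0 < \<epsilon>" "\<epsilon> < (1 / real CARD('k::{finite,field})) ^ N" "N \<ge> 1"
    and k: "(k::'k mat2) \<in> V_eps \<epsilon>"
  shows "near_one ((1 / real CARD('k)) ^ N) k"
proof -
  define q where "q = real CARD('k)"
  have q: "q \<ge> 2" unfolding q_def by (rule card_field_ge_2)
  have "(1/q)^N \<le> 1/q" using q power_decreasing[of 1 N "1/q"] assms(3) by simp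
  hence small: "\<not> \<epsilon> > 1 / q" using assms(2) q_def by simp
  have "log q \<epsilon> < log q ((1/q)^N)" using assms(1,2) q q_def by simp
  also have "log q ((1/q)^N) = - real N" using q by (simp add: log_nat_power log_divide)
  finally have N: "int N \<le> N_eps TYPE('k) \<epsilon>" unfolding N_eps_def q_def by linarith
  have "k \<in> SL2O" and entries: "\<forall>i j. fls_subdegree (k$i$j - (if i = j then 1 else 0)) \<ge> N_eps TYPE('k) \<epsilon>
      \<or> k$i$j - (if i = j then 1 else 0) = 0"
    using k small by (auto simp: V_eps_def q_def)
  have bound: "absv (k$i$j - (if i = j then 1 else 0)) \<le> (1 / q) ^ N" for i j
    unfolding q_def using entries N by (intro absv_le_of_subdegree_ge) force
  show ?thesis
    using bound[of 1 1] bound[of 1 2] bound[of 2 1] bound[of 2 2] \<open>k \<in> SL2O\<close>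
    unfolding near_one_def q_def by (simp add: SL2O_def SL2_def)
qed

lemma mat_1_in_V_eps: "(mat 1 :: 'k::{finite,field} mat2) \<in> V_eps \<epsilon>"
proof -
  have "\<forall>i j. (mat 1 :: 'k mat2)$i$j \<in> valring" by (simp add: mat_def valring_def)
  hence "(mat 1 :: 'k mat2) \<in> SL2O" by (simp add: SL2O_def SL2_def)
  thus ?thesis by (auto simp: V_eps_def mat_def)
qed

lemma thicken_thin_eq_self:
  fixes B :: "'k::{finite,field} mat2 set"
  assumes V: "\<And>k::'k mat2. k \<in> V_eps \<epsilon> \<Longrightarrow> near_one \<delta> k"
    and inv: "\<And>k h b. near_one \<delta> k \<Longrightarrow> near_one \<delta> h \<Longrightarrow> b \<in> B \<Longrightarrow> k ** b ** h \<in> B"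
  shows "thicken \<epsilon> B = B" "thin \<epsilon> B = B"
proof -
  have one: "b = mat 1 ** b ** mat 1" for b :: "'k mat2" by simp
  show "thicken \<epsilon> B = B"
    unfolding thicken_def using V inv one mat_1_in_V_eps by blast
  have "x \<in> (\<lambda>b. g ** b ** h) ` B" if x: "x \<in> B" and "g \<in> V_eps \<epsilon>" "h \<in> V_eps \<epsilon>" for x g h
  proof -
    have g: "near_one \<delta> g" and h: "near_one \<delta> h" using V that(2,3) by auto
    hence "det g = 1" "det h = 1" by (auto simp: near_one_def)
    hence "x = g ** (adj2 g ** x ** adj2 h) ** h"
      by (simp add: matrix_mul_assoc adj2_mult) (simp flip: matrix_mul_assoc add: adj2_mult)
    moreover have "adj2 g ** x ** adj2 h \<in> B" using inv near_one_adj2 g h x by blast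
    ultimately show ?thesis by blast
  qed
  moreover have "x \<in> B" if "x \<in> (\<lambda>b. mat 1 ** b ** mat 1) ` B" for x
    using that by auto
  ultimately show "thin \<epsilon> B = B"
    unfolding thin_def using mat_1_in_V_eps by blast
qed

lemma power_one_over_less_exists:
  fixes q c :: real
  assumes "q \<ge> 2" "c > 0"
  obtains N :: nat where "N \<ge> 1" "(1 / q) ^ N < c"
proof -
  obtain N where "(1 / q) ^ N < c" using real_arch_pow_inv[OF assms(2), of "1 / q"] assms(1) by auto
  moreover have "(1 / q) ^ Suc N \<le> (1 / q) ^ N" using assms(1) by (intro power_decreasing) auto
  ultimately show ?thesis using that[of "Suc N"] by simp
qed

theorem proposition4p2:
  fixes \<mu> :: "'k::{finite,field} mat2 measure"
    and \<pi> :: "'k fls"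
    and \<Theta> :: "('k fls \<times> 'k fls) set"
    and D :: "'k fls set"
    and r s :: real
  assumes "haar_SL2 \<mu>"
    and "uniformizer \<pi>"
    and "is_sphere_ball \<Theta> r" and "r < 1"
    and "is_field_ball D s" and "s < 1"
  shows "\<exists>\<epsilon>0>0. \<exists>n0::nat. \<forall>\<epsilon> n. 0 < \<epsilon> \<and> \<epsilon> < \<epsilon>0 \<and> n0 \<le> n \<longrightarrow>
           emeasure \<mu> (thicken \<epsilon> (PAU \<pi> \<Theta> D n)) \<le> emeasure \<mu> (thin \<epsilon> (PAU \<pi> \<Theta> D n))"
proof -
  obtain R where R: "R \<ge> 1" "\<forall>x\<in>D. absv x \<le> R" using field_ball_bounded[OF assms(5,6)] .
  define q where "q = real CARD('k)"
  have "q \<ge> 2" unfolding q_def by (rule card_field_ge_2)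
  have RR: "R * R > 0" using R(1) by (simp add: zero_less_mult_iff)
  have "min r s / (R * R) > 0"
    using assms(3,5) RR by (simp add: is_sphere_ball_def is_field_ball_def)
  then obtain N where "N \<ge> 1" and N: "(1 / q) ^ N < min r s / (R * R)"
    using power_one_over_less_exists \<open>q \<ge> 2\<close> by blast
  define \<delta> where "\<delta> = (1 / q) ^ N"
  have "R * R * \<delta> < min r s"
    using N RR by (simp only: \<delta>_def pos_less_divide_eq mult.commute)
  hence \<delta>: "R * R * \<delta> < r" "R * R * \<delta> < s" by simp_all
  have V: "near_one \<delta> k" if "0 < \<epsilon>" "\<epsilon> < \<delta>" "k \<in> V_eps \<epsilon>" for \<epsilon> and k :: "'k mat2"
    using V_eps_near_one[of \<epsilon> N k] \<open>N \<ge> 1\<close> that by (simp add: \<delta>_def q_def)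
  have Ths: "\<Theta> \<subseteq> sphere1" using assms(3) by (auto simp: is_sphere_ball_def)
  have "thicken \<epsilon> (PAU \<pi> \<Theta> D n) = thin \<epsilon> (PAU \<pi> \<Theta> D n)" if "0 < \<epsilon>" "\<epsilon> < \<delta>" for \<epsilon> n
    using thicken_thin_eq_self[OF V[OF that] PAU_coords_bi_invariant[OF assms(2-5) R \<delta>]]
    by (simp add: PAU_eq_PAU_coords[OF assms(2) Ths])
  moreover have "\<delta> > 0" unfolding \<delta>_def using \<open>q \<ge> 2\<close> by simp
  ultimately show ?thesis by (metis order.refl)
qed

end
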